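(* Let $A$ be a finite nonempty subset of $(0,\infty)$ and let $f:A\to[0,\infty)$. Define the discrete Hirsch relation $h_f=\{(f(a)/a,\,a): a\in A\}$. Then $h_f=f$ (i.e. $h_f$ coincides with the graph $\{(a,f(a)):a\in A\}$ of $f$) if and only if $A=\{1\}$ and $f(1)=1$.
   Context: For a function $f$ on a finite set $A\subset(0,\infty)$, the Hirsch function $h_f$ is defined exactly at the points $\theta=f(a)/a$, $a\in A$, and maps $f(a)/a$ to $a$. Equality $h_f=f$ means equality of functions: same domain and same values (equivalently, equality of the graphs as sets of pairs). *)

theory Defs
  imports Main Complex_Main
begin

definition graph_on :: "real set \<Rightarrow> (real \<Rightarrow> real) \<Rightarrow> (real \<times> real) set" where
  "graph_on A f = {(a, f a) | a. a \<in> A}"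

definition hirsch_rel :: "real set \<Rightarrow> (real \<Rightarrow> real) \<Rightarrow> (real \<times> real) set" where
  "hirsch_rel A f = {(f a / a, a) | a. a \<in> A}"

end

theory Submission
  imports Defs
begin

text \<open>If \<open>h\<^sub>f = f\<close>, then \<open>f\<close> maps \<open>A\<close> into \<open>A\<close> and \<open>b = f(a)/a\<close> lies in \<open>A\<close>
  with \<open>f(b) = a\<close>, so \<open>a = b \<cdot> (f(b)/b)\<close>. At \<open>a = max A\<close> the bound \<open>f(a) \<le> a\<close> gives
  \<open>b \<le> 1\<close>, while \<open>f(b)/b \<le> a\<close> gives \<open>b \<ge> 1\<close>; hence \<open>b = 1\<close> and \<open>f(1) = max A\<close>.
  Dually \<open>f(1) = min A\<close>, so \<open>A = {1}\<close>.\<close>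

lemma graph_on_subset_hirsch_rel_imp_image_mem:
  assumes "graph_on A f \<subseteq> hirsch_rel A f" and "a \<in> A"
  shows "f a \<in> A"
proof -
  have "(a, f a) \<in> hirsch_rel A f" using assms unfolding graph_on_def by auto
  then show ?thesis unfolding hirsch_rel_def by auto
qed

lemma hirsch_rel_subset_graph_on_imp:
  assumes "hirsch_rel A f \<subseteq> graph_on A f" and "a \<in> A"
  shows "f a / a \<in> A" and "f (f a / a) = a"
proof -
  have "(f a / a, a) \<in> graph_on A f" using assms unfolding hirsch_rel_def by auto
  then show "f a / a \<in> A" and "f (f a / a) = a" unfolding graph_on_def by auto
qed

lemma hirsch_rel_eq_graph_on_imp_f1_Max:
  assumes eq: "hirsch_rel A f = graph_on A f" and pos: "\<forall>a\<in>A. a > 0"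
    and "M \<in> A" and le_M: "\<forall>a\<in>A. a \<le> M"
  shows "1 \<in> A" and "f 1 = M"
proof -
  define b where "b = f M / M"
  have "b \<in> A" and fb: "f b = M"
    using hirsch_rel_subset_graph_on_imp[OF _ \<open>M \<in> A\<close>] eq by (auto simp: b_def)
  have "M > 0" "b > 0" using pos \<open>M \<in> A\<close> \<open>b \<in> A\<close> by auto
  have "f M \<le> M" using graph_on_subset_hirsch_rel_imp_image_mem[OF _ \<open>M \<in> A\<close>] eq le_M by auto
  then have "b \<le> 1" using \<open>M > 0\<close> by (simp add: b_def)
  have "M / b \<le> M"
    using hirsch_rel_subset_graph_on_imp(1)[OF _ \<open>b \<in> A\<close>] eq le_M fb by auto
  then have "1 \<le> b" using \<open>M > 0\<close> \<open>b > 0\<close> by (simp add: divide_le_eq)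
  then have "b = 1" using \<open>b \<le> 1\<close> by simp
  then show "1 \<in> A" and "f 1 = M" using \<open>b \<in> A\<close> fb by auto
qed

lemma hirsch_rel_eq_graph_on_imp_f1_Min:
  assumes eq: "hirsch_rel A f = graph_on A f" and pos: "\<forall>a\<in>A. a > 0"
    and "m \<in> A" and ge_m: "\<forall>a\<in>A. m \<le> a"
  shows "f 1 = m"
proof -
  define c where "c = f m / m"
  have "c \<in> A" and fc: "f c = m"
    using hirsch_rel_subset_graph_on_imp[OF _ \<open>m \<in> A\<close>] eq by (auto simp: c_def)
  have "m > 0" "c > 0" using pos \<open>m \<in> A\<close> \<open>c \<in> A\<close> by auto
  have "m \<le> f m" using graph_on_subset_hirsch_rel_imp_image_mem[OF _ \<open>m \<in> A\<close>] eq ge_m by auto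
  then have "1 \<le> c" using \<open>m > 0\<close> by (simp add: c_def)
  have "m \<le> m / c"
    using hirsch_rel_subset_graph_on_imp(1)[OF _ \<open>c \<in> A\<close>] eq ge_m fc by auto
  then have "c \<le> 1" using \<open>m > 0\<close> \<open>c > 0\<close> by (simp add: le_divide_eq)
  then have "c = 1" using \<open>1 \<le> c\<close> by simp
  then show "f 1 = m" using fc by simp
qed

theorem theorem3:
  fixes A :: "real set" and f :: "real \<Rightarrow> real"
  assumes "finite A" and "A \<noteq> {}" and "\<forall>a\<in>A. a > 0"
    and "\<forall>a\<in>A. f a \<ge> 0"
  shows "hirsch_rel A f = graph_on A f \<longleftrightarrow> (A = {1} \<and> f 1 = 1)"
proof
  assume eq: "hirsch_rel A f = graph_on A f"
  have Max: "Max A \<in> A" "\<forall>a\<in>A. a \<le> Max A" and Min: "Min A \<in> A" "\<forall>a\<in>A. Min A \<le> a"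
    using assms(1,2) by auto
  have "1 \<in> A" and f1_Max: "f 1 = Max A"
    using hirsch_rel_eq_graph_on_imp_f1_Max[OF eq assms(3) Max] by auto
  moreover have "f 1 = Min A"
    using hirsch_rel_eq_graph_on_imp_f1_Min[OF eq assms(3) Min] .
  ultimately have "A = {1}"
    using Max(2) Min(2) by (fastforce intro: antisym)
  then show "A = {1} \<and> f 1 = 1" using f1_Max by simp
qed (auto simp: hirsch_rel_def graph_on_def)

end
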